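(* Let $k$ be a field of characteristic $p>0$. Let $\mathfrak{a}$ be a finite-dimensional restricted Lie algebra over $k$ with trivial Lie bracket $[a,a']=0$ and trivial $p$-map $a^{[p]}=0$, and let $\mathfrak{b}=ke$ be the one-dimensional restricted Lie algebra with $p$-map $(\lambda e)^{[p]}=\lambda^p e$. On the vector space $\mathfrak{g}=\mathfrak{a}\oplus\mathfrak{b}$ define the Lie bracket $[a+\lambda e,a'+\lambda' e]=\lambda a'-\lambda' a$ (the semidirect product $\mathfrak{a}\rtimes\mathfrak{b}$ for the homomorphism $\mathfrak{b}\to\mathfrak{gl}(\mathfrak{a})$, $e\mapsto \mathrm{id}_{\mathfrak{a}}$) and the map $(a+\lambda e)^{[p]}=\lambda^{p-1}(a+\lambda e)$ for $a,a'\in\mathfrak{a}$, $\lambda,\lambda'\in k$. Then this map is a $p$-map making $\mathfrak{g}$ a restricted Lie algebra such that the inclusions of $\mathfrak{a}$ and $\mathfrak{b}$ are homomorphisms of restricted Lie algebras; it is the unique $p$-map on the Lie algebra $\mathfrak{g}$ with this property; and every nonzero vector of $\mathfrak{g}$ is $p$-closed.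
   Context: A restricted Lie algebra over $k$ is a Lie algebra $\mathfrak{g}$ with a map $x\mapsto x^{[p]}$ satisfying $(\lambda x)^{[p]}=\lambda^p x^{[p]}$, $[x^{[p]},y]=(\mathrm{ad}_x)^p(y)$ and $(x+y)^{[p]}=x^{[p]}+y^{[p]}+\sum_{r=1}^{p-1}s_r(x,y)$, where $s_r$ are the usual universal Lie polynomials (Jacobson's formula). A vector $x\in\mathfrak{g}$ is called $p$-closed if $x\neq 0$ and $x^{[p]}\in kx$. *)

theory Defs
  imports Complex_Main "HOL-Library.Product_Plus"
begin

definition lie_algebra :: "('k::field \<Rightarrow> 'g::ab_group_add \<Rightarrow> 'g) \<Rightarrow> ('g \<Rightarrow> 'g \<Rightarrow> 'g) \<Rightarrow> bool" where
  "lie_algebra sc br \<longleftrightarrow>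
     vector_space sc \<and>
     (\<forall>x y z. br (x + y) z = br x z + br y z) \<and>
     (\<forall>x y z. br x (y + z) = br x y + br x z) \<and>
     (\<forall>c x y. br (sc c x) y = sc c (br x y)) \<and>
     (\<forall>c x y. br x (sc c y) = sc c (br x y)) \<and>
     (\<forall>x. br x x = 0) \<and>
     (\<forall>x y z. br x (br y z) + br y (br z x) + br z (br x y) = 0)"

text \<open>Jacobson's universal Lie polynomials: r * s_r(x,y) is the coefficient of t^(r-1)
in ad(t x + y)^(p-1)(x).  Expanding ad(t x + y)^(p-1) = sum over words u in {x,y}^(p-1)
of t^(number of x in u) ad(u_1) ... ad(u_(p-1)); a word is a bool list
(True = x, False = y), and foldr applies ad(u_1) o ... o ad(u_(p-1)).\<close>
definition jacobson_s :: "nat \<Rightarrow> ('k::field \<Rightarrow> 'g::ab_group_add \<Rightarrow> 'g) \<Rightarrow> ('g \<Rightarrow> 'g \<Rightarrow> 'g)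
     \<Rightarrow> nat \<Rightarrow> 'g \<Rightarrow> 'g \<Rightarrow> 'g" where
  "jacobson_s p sc br r x y =
     sc (inverse (of_nat r))
       (\<Sum>u\<in>{u::bool list. length u = p - 1 \<and> length (filter id u) = r - 1}.
          foldr (\<lambda>b v. br (if b then x else y) v) u x)"

definition restricted_lie_algebra ::
  "nat \<Rightarrow> ('k::field \<Rightarrow> 'g::ab_group_add \<Rightarrow> 'g) \<Rightarrow> ('g \<Rightarrow> 'g \<Rightarrow> 'g) \<Rightarrow> ('g \<Rightarrow> 'g) \<Rightarrow> bool" where
  "restricted_lie_algebra p sc br pm \<longleftrightarrow>
     lie_algebra sc br \<and>
     (\<forall>c x. pm (sc c x) = sc (c ^ p) (pm x)) \<and>
     (\<forall>x y. br (pm x) y = ((br x) ^^ p) y) \<and>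
     (\<forall>x y. pm (x + y) = pm x + pm y + (\<Sum>r=1..p-1. jacobson_s p sc br r x y))"

definition restricted_hom ::
  "('k::field \<Rightarrow> 'g::ab_group_add \<Rightarrow> 'g) \<Rightarrow> ('g \<Rightarrow> 'g \<Rightarrow> 'g) \<Rightarrow> ('g \<Rightarrow> 'g)
   \<Rightarrow> ('k \<Rightarrow> 'h::ab_group_add \<Rightarrow> 'h) \<Rightarrow> ('h \<Rightarrow> 'h \<Rightarrow> 'h) \<Rightarrow> ('h \<Rightarrow> 'h)
   \<Rightarrow> ('g \<Rightarrow> 'h) \<Rightarrow> bool" where
  "restricted_hom sc1 br1 pm1 sc2 br2 pm2 f \<longleftrightarrow>
     Vector_Spaces.linear sc1 sc2 f \<and>
     (\<forall>x y. f (br1 x y) = br2 (f x) (f y)) \<and>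
     (\<forall>x. f (pm1 x) = pm2 (f x))"

definition p_closed :: "('k::field \<Rightarrow> 'g::ab_group_add \<Rightarrow> 'g) \<Rightarrow> ('g \<Rightarrow> 'g) \<Rightarrow> 'g \<Rightarrow> bool" where
  "p_closed sc pm x \<longleftrightarrow> x \<noteq> 0 \<and> (\<exists>c. pm x = sc c x)"

text \<open>The semidirect product g = a x| k e, elements (a, lambda) = a + lambda e.\<close>
definition sd_scale :: "('k::field \<Rightarrow> 'a::ab_group_add \<Rightarrow> 'a) \<Rightarrow> 'k \<Rightarrow> 'a \<times> 'k \<Rightarrow> 'a \<times> 'k" where
  "sd_scale sc c v = (sc c (fst v), c * snd v)"

definition sd_bracket :: "('k::field \<Rightarrow> 'a::ab_group_add \<Rightarrow> 'a) \<Rightarrow> 'a \<times> 'k \<Rightarrow> 'a \<times> 'k \<Rightarrow> 'a \<times> 'k" where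
  "sd_bracket sc v w = (sc (snd v) (fst w) - sc (snd w) (fst v), 0)"

definition sd_pmap :: "nat \<Rightarrow> ('k::field \<Rightarrow> 'a::ab_group_add \<Rightarrow> 'a) \<Rightarrow> 'a \<times> 'k \<Rightarrow> 'a \<times> 'k" where
  "sd_pmap p sc v = sd_scale sc (snd v ^ (p - 1)) v"

end

(*
  In g = a x| k e the ideal a is abelian and e acts on it as the identity, so an iterated
  bracket [z_1, [z_2, ... [z_k, w]]] with w in a merely multiplies w by the product of the
  e-coordinates of the z_i.  Hence every Jacobson polynomial s_r(x, y) is a scalar multiple of
  [x, y], and in characteristic p their sum is Q [x, y], where for x = a + l e, y = b + m e the
  scalar Q is the polynomial ((l + m)^(p-1) - m^(p-1)) / l.  Jacobson's formula for
  (a + l e)^[p] = l^(p-1) (a + l e) then reduces to l Q = (l + m)^(p-1) - m^(p-1),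
  m Q = l^(p-1) - (l + m)^(p-1) and (l + m)^p = l^p + m^p.  Uniqueness holds because Jacobson's
  formula determines a p-map on a + l e from its values on a and on l e, which the
  homomorphism conditions fix.
*)
theory Submission
  imports Defs "HOL-Computational_Algebra.Primes"
begin

definition bool_words :: "nat \<Rightarrow> nat \<Rightarrow> bool list set" where
  "bool_words n k = {u. length u = n \<and> length (filter id u) = k}"

lemma finite_bool_words: "finite (bool_words n k)"
  by (rule finite_subset[OF _ finite_lists_length_eq[of "UNIV :: bool set" n]])
     (auto simp: bool_words_def)

lemma bool_words_Suc:
  "bool_words (Suc n) k = (\<lambda>u. u @ [False]) ` bool_words n k
     \<union> (if k = 0 then {} else (\<lambda>u. u @ [True]) ` bool_words n (k - 1))"
  (is "?W = ?V")
proof (rule set_eqI)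
  show "u \<in> ?W \<longleftrightarrow> u \<in> ?V" for u
    by (cases u rule: rev_cases) (auto simp: bool_words_def)
qed

lemma sum_bool_words_Suc:
  "sum h (bool_words (Suc n) k) = (\<Sum>u\<in>bool_words n k. h (u @ [False]))
     + (if k = 0 then 0 else (\<Sum>u\<in>bool_words n (k - 1). h (u @ [True])))"
proof -
  have "(\<lambda>u. u @ [False]) ` bool_words n k \<inter> (\<lambda>u. u @ [True]) ` bool_words n (k - 1) = {}"
    by auto
  then show ?thesis
    by (simp add: bool_words_Suc finite_bool_words sum.union_disjoint sum.reindex inj_on_def)
qed

lemma card_bool_words: "card (bool_words n k) = n choose k"
proof (induction n arbitrary: k)
  case 0
  have "bool_words 0 k = (if k = 0 then {[]} else {})"
    by (auto simp: bool_words_def)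
  then show ?case by simp
next
  case (Suc n)
  have "card (bool_words (Suc n) k)
      = card (bool_words n k) + (if k = 0 then 0 else card (bool_words n (k - 1)))"
    using sum_bool_words_Suc[of "\<lambda>_. 1 :: nat" n k] by simp
  then show ?case
    using Suc.IH by (cases k) simp_all
qed

lemma prod_list_map_bool_words:
  assumes "u \<in> bool_words n k"
  shows "prod_list (map (\<lambda>b. if b then s else t) u) = s ^ k * (t :: 'a::comm_monoid_mult) ^ (n - k)"
proof -
  have "prod_list (map (\<lambda>b. if b then s else t) u)
      = s ^ length (filter id u) * t ^ length (filter Not u)"
    by (induction u) (auto simp: mult_ac)
  moreover have "length (filter Not u) = n - k"
    using assms sum_length_filter_compl[of id u] by (auto simp: bool_words_def comp_def)
  ultimately show ?thesis using assms by (simp add: bool_words_def)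
qed

lemma of_nat_choose_CHAR_eq_0:
  assumes "CHAR('a::semiring_1) = p" "prime p" "0 < r" "r < p"
  shows "(of_nat (p choose r) :: 'a) = 0"
  using assms dvd_choose_prime[of r p] by (simp add: of_nat_eq_0_iff_char_dvd)

lemma inverse_of_nat_mult_choose_CHAR:
  assumes "CHAR('a::field) = p" "prime p" "1 \<le> r" "r \<le> p - 1"
  shows "inverse (of_nat r) * of_nat ((p - 2) choose (r - 1)) = - (of_nat ((p - 1) choose r) :: 'a)"
proof -
  obtain q where q: "p = Suc (Suc q)"
    using prime_ge_2_nat[OF assms(2)] by (metis add_2_eq_Suc le_Suc_ex)
  obtain j where j: "r = Suc j"
    using assms(3) by (cases r) auto
  have "(of_nat (Suc q) :: 'a) = - 1"
    using assms(1) q of_nat_CHAR[where 'a='a] by (simp add: eq_neg_iff_add_eq_0)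
  then have "- of_nat (q choose j) = of_nat (Suc q choose Suc j) * (of_nat (Suc j) :: 'a)"
    using Suc_times_binomial_eq[of q j] by (metis mult_minus1 of_nat_mult)
  moreover have "(of_nat r :: 'a) \<noteq> 0"
    using assms by (auto simp: of_nat_eq_0_iff_char_dvd dest: dvd_imp_le)
  ultimately show ?thesis
    using q j by (simp add: field_simps)
qed

definition binomial_diff_quotient :: "nat \<Rightarrow> 'a::comm_semiring_1 \<Rightarrow> 'a \<Rightarrow> 'a" where
  "binomial_diff_quotient n l m = (\<Sum>r=1..n. of_nat (n choose r) * l ^ (r - 1) * m ^ (n - r))"

lemma mult_binomial_diff_quotient:
  fixes l m :: "'a::comm_ring_1"
  shows "l * binomial_diff_quotient n l m = (l + m) ^ n - m ^ n"
proof -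
  have "(l + m) ^ n = m ^ n + (\<Sum>r=1..n. of_nat (n choose r) * l ^ r * m ^ (n - r))"
    by (simp add: binomial_ring atMost_atLeast0 sum.atLeast_Suc_atMost)
  also have "(\<Sum>r=1..n. of_nat (n choose r) * l ^ r * m ^ (n - r)) = l * binomial_diff_quotient n l m"
    unfolding binomial_diff_quotient_def sum_distrib_left
    by (intro sum.cong refl) (auto simp: mult_ac power_eq_if)
  finally show ?thesis by simp
qed

lemma binomial_diff_quotient_swap_CHAR:
  fixes l m :: "'a::comm_ring_1"
  assumes "CHAR('a) = Suc n" "prime (Suc n)"
  shows "binomial_diff_quotient n m l = - binomial_diff_quotient n l m"
proof -
  have "binomial_diff_quotient n m l
      = (\<Sum>r=1..n. of_nat (n choose (r - 1)) * l ^ (r - 1) * m ^ (n - r))"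
    unfolding binomial_diff_quotient_def
  proof (subst sum.atLeastAtMost_rev, intro sum.cong refl)
    fix r assume r: "r \<in> {1..n}"
    then have "n + 1 - r - 1 = n - r" "n - (n + 1 - r) = r - 1"
      by auto
    moreover have "n choose (n + 1 - r) = n choose (r - 1)"
      using r binomial_symmetric[of "r - 1" n] by (auto simp: Suc_diff_le)
    ultimately show "of_nat (n choose (n + 1 - r)) * m ^ (n + 1 - r - 1) * l ^ (n - (n + 1 - r))
        = of_nat (n choose (r - 1)) * l ^ (r - 1) * m ^ (n - r)"
      by (simp add: mult_ac)
  qed
  also have "\<dots>
      = (\<Sum>r=1..n. (of_nat (Suc n choose r) - of_nat (n choose r)) * l ^ (r - 1) * m ^ (n - r))"
  proof (intro sum.cong refl)
    fix r assume "r \<in> {1..n}"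
    then have "(n choose (r - 1)) + (n choose r) = Suc n choose r"
      using binomial_Suc_Suc[of n "r - 1"] by simp
    then have "of_nat (n choose (r - 1)) = (of_nat (Suc n choose r) - of_nat (n choose r) :: 'a)"
      by (metis add_diff_cancel of_nat_add)
    then show "of_nat (n choose (r - 1)) * l ^ (r - 1) * m ^ (n - r)
        = (of_nat (Suc n choose r) - of_nat (n choose r)) * l ^ (r - 1) * m ^ (n - r)"
      by simp
  qed
  also have "\<dots> = - binomial_diff_quotient n l m"
    using of_nat_choose_CHAR_eq_0[OF assms]
    by (simp add: binomial_diff_quotient_def left_diff_distrib sum_negf)
  finally show ?thesis .
qed

lemma restricted_lie_algebra_pmap_add_eq:
  assumes "restricted_lie_algebra p sc br pm" "restricted_lie_algebra p sc br pm'"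
    and "pm x = pm' x" "pm y = pm' y"
  shows "pm (x + y) = pm' (x + y)"
  using assms by (simp add: restricted_lie_algebra_def)

context vector_space
begin

lemma sd_vector_space: "vector_space (sd_scale scale)"
  by unfold_locales (auto simp: sd_scale_def scale_right_distrib scale_left_distrib algebra_simps)

lemma sd_lie_algebra: "lie_algebra (sd_scale scale) (sd_bracket scale)"
  unfolding lie_algebra_def
  by (auto simp: sd_vector_space sd_scale_def sd_bracket_def algebra_simps zero_prod_def)

lemma sd_bracket_ideal: "sd_bracket scale x (d, 0) = sd_scale scale (snd x) (d, 0)"
  by (simp add: sd_bracket_def sd_scale_def)

lemma sd_bracket_funpow:
  "(sd_bracket scale x ^^ Suc n) y = sd_scale scale (snd x ^ n) (sd_bracket scale x y)"
  by (induction n) (auto simp: sd_bracket_def sd_scale_def scale_right_diff_distrib mult_ac)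

lemma foldr_sd_bracket_ideal:
  "foldr (\<lambda>b. sd_bracket scale (if b then x else y)) u (d, 0)
     = sd_scale scale (prod_list (map (\<lambda>b. if b then snd x else snd y) u)) (d, 0)"
  by (induction u) (auto simp: sd_bracket_ideal sd_scale_def)

lemma jacobson_s_sd:
  assumes "p \<ge> 2"
  shows "jacobson_s p (sd_scale scale) (sd_bracket scale) r x y
     = sd_scale scale (inverse (of_nat r) * of_nat ((p - 2) choose (r - 1))
         * snd x ^ (r - 1) * snd y ^ (p - 2 - (r - 1))) (sd_bracket scale y x)"
proof -
  interpret sd: vector_space "sd_scale scale" by (rule sd_vector_space)
  define F where "F = (\<lambda>b. sd_bracket scale (if b then x else y))"
  define c where "c = snd x ^ (r - 1) * snd y ^ (p - 2 - (r - 1))"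
  obtain d where yx: "sd_bracket scale y x = (d, 0)"
    by (simp add: sd_bracket_def)
  have F_ideal: "foldr F u (e, 0)
      = sd_scale scale (prod_list (map (\<lambda>b. if b then snd x else snd y) u)) (e, 0)" for u e
    unfolding F_def by (rule foldr_sd_bracket_ideal)
  txt \<open>Only the innermost letter matters: \<open>[x, x] = 0\<close>, and \<open>[y, x]\<close> lies in the ideal.\<close>
  have "F True x = (0, 0)" "F False x = (d, 0)"
    using yx by (simp_all add: F_def sd_bracket_def)
  then have "foldr F (u @ [True]) x = 0" "foldr F (u @ [False]) x = sd_scale scale
      (prod_list (map (\<lambda>b. if b then snd x else snd y) u)) (sd_bracket scale y x)" for u
    using F_ideal[of u 0] F_ideal[of u d] yx by (simp_all add: sd_scale_def zero_prod_def)
  then have "(\<Sum>u\<in>bool_words (Suc (p - 2)) (r - 1). foldr F u x)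
      = (\<Sum>u\<in>bool_words (p - 2) (r - 1). sd_scale scale c (sd_bracket scale y x))"
    by (simp add: sum_bool_words_Suc prod_list_map_bool_words c_def cong: sum.cong)
  also have "\<dots> = sd_scale scale (of_nat ((p - 2) choose (r - 1)) * c) (sd_bracket scale y x)"
    by (simp add: card_bool_words flip: sd.scale_sum_left)
  finally show ?thesis
    using assms unfolding jacobson_s_def bool_words_def[symmetric] F_def[symmetric] c_def
    by (simp add: Suc_diff_Suc numeral_2_eq_2 mult_ac)
qed

lemma sum_jacobson_s_sd:
  assumes "CHAR('a) = p" "prime p"
  shows "(\<Sum>r=1..p-1. jacobson_s p (sd_scale scale) (sd_bracket scale) r x y)
     = sd_scale scale (binomial_diff_quotient (p - 1) (snd x) (snd y)) (sd_bracket scale x y)"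
proof -
  interpret sd: vector_space "sd_scale scale" by (rule sd_vector_space)
  have p: "p \<ge> 2" using assms(2) by (rule prime_ge_2_nat)
  have yx: "sd_bracket scale y x = - sd_bracket scale x y"
    by (simp add: sd_bracket_def)
  have "jacobson_s p (sd_scale scale) (sd_bracket scale) r x y
      = sd_scale scale (of_nat ((p - 1) choose r) * snd x ^ (r - 1) * snd y ^ (p - 1 - r))
          (sd_bracket scale x y)" if "r \<in> {1..p-1}" for r
  proof -
    have "p - 2 - (r - 1) = p - 1 - r" using that by simp
    then show ?thesis
      using that inverse_of_nat_mult_choose_CHAR[OF assms, of r]
      by (simp add: jacobson_s_sd[OF p] yx mult.assoc)
  qed
  then show ?thesis
    by (simp add: binomial_diff_quotient_def sd.scale_sum_left)
qed

lemma sd_pmap_add: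
  assumes "CHAR('a) = p" "prime p"
  shows "sd_pmap p scale (x + y) = sd_pmap p scale x + sd_pmap p scale y
     + sd_scale scale (binomial_diff_quotient (p - 1) (snd x) (snd y)) (sd_bracket scale x y)"
proof -
  obtain a l b m where x: "x = (a, l)" and y: "y = (b, m)" by fastforce
  define Q where "Q = binomial_diff_quotient (p - 1) l m"
  obtain n where n: "p = Suc n" using prime_gt_0_nat[OF assms(2)] gr0_implies_Suc by blast
  have lQ: "l * Q = (l + m) ^ n - m ^ n"
    by (simp add: Q_def n mult_binomial_diff_quotient)
  have mQ: "m * Q = l ^ n - (l + m) ^ n"
    using binomial_diff_quotient_swap_CHAR[of n l m] mult_binomial_diff_quotient[of m n l] assms
    by (simp add: Q_def n add.commute)
  have "(l + m) ^ p = l ^ p + m ^ p"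
    using assms by (simp add: freshmans_dream)
  then have "(l + m) ^ n * (l + m) = l ^ n * l + m ^ n * m"
    by (simp add: n mult.commute)
  moreover have "scale ((l + m) ^ n) (a + b)
      = scale (l ^ n) a + scale (m ^ n) b + scale Q (scale l b - scale m a)"
  proof -
    have "scale ((l + m) ^ n) a = scale (l ^ n - m * Q) a"
      and "scale ((l + m) ^ n) b = scale (m ^ n + l * Q) b"
      using lQ mQ by simp_all
    then show ?thesis
      by (simp add: scale_right_distrib scale_left_distrib scale_left_diff_distrib
          scale_right_diff_distrib mult.commute[of Q])
  qed
  ultimately show ?thesis
    by (simp add: x y n Q_def sd_pmap_def sd_scale_def sd_bracket_def)
qed

lemma sd_restricted_lie_algebra:
  assumes "CHAR('a) = p" "prime p"
  shows "restricted_lie_algebra p (sd_scale scale) (sd_bracket scale) (sd_pmap p scale)"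
  unfolding restricted_lie_algebra_def
proof (intro conjI allI)
  obtain n where n: "p = Suc n" using prime_gt_0_nat[OF assms(2)] gr0_implies_Suc by blast
  show "lie_algebra (sd_scale scale) (sd_bracket scale)"
    by (rule sd_lie_algebra)
  show "sd_pmap p scale (sd_scale scale c x) = sd_scale scale (c ^ p) (sd_pmap p scale x)" for c x
    by (simp add: n sd_pmap_def sd_scale_def power_mult_distrib mult_ac)
  show "sd_bracket scale (sd_pmap p scale x) y = (sd_bracket scale x ^^ p) y" for x y
    unfolding n sd_bracket_funpow
    by (simp add: sd_pmap_def sd_scale_def sd_bracket_def scale_right_diff_distrib mult_ac)
  show "sd_pmap p scale (x + y) = sd_pmap p scale x + sd_pmap p scale y
      + (\<Sum>r=1..p-1. jacobson_s p (sd_scale scale) (sd_bracket scale) r x y)" for x y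
    unfolding sum_jacobson_s_sd[OF assms] by (rule sd_pmap_add[OF assms])
qed

lemma restricted_hom_sd_inl:
  assumes "p \<ge> 2"
  shows "restricted_hom scale (\<lambda>_ _. 0) (\<lambda>_. 0) (sd_scale scale) (sd_bracket scale)
    (sd_pmap p scale) (\<lambda>a. (a, 0))"
  using assms vector_space_axioms sd_vector_space
  by (auto simp: restricted_hom_def Vector_Spaces.linear_iff sd_scale_def sd_bracket_def
      sd_pmap_def zero_prod_def)

lemma restricted_hom_sd_inr:
  assumes "p > 0"
  shows "restricted_hom (*) (\<lambda>_ _. 0) (\<lambda>c. c ^ p) (sd_scale scale) (sd_bracket scale)
    (sd_pmap p scale) (\<lambda>c. (0, c))"
proof -
  have "vector_space ((*) :: 'a \<Rightarrow> 'a \<Rightarrow> 'a)"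
    by unfold_locales (auto simp: algebra_simps)
  then show ?thesis
    using assms sd_vector_space
    by (auto simp: restricted_hom_def Vector_Spaces.linear_iff sd_scale_def sd_bracket_def
        sd_pmap_def zero_prod_def power_eq_if)
qed

lemma sd_pmap_unique:
  assumes "CHAR('a) = p" "prime p"
    and "restricted_lie_algebra p (sd_scale scale) (sd_bracket scale) pm"
    and "restricted_hom scale (\<lambda>_ _. 0) (\<lambda>_. 0) (sd_scale scale) (sd_bracket scale) pm (\<lambda>a. (a, 0))"
    and "restricted_hom (*) (\<lambda>_ _. 0) (\<lambda>c. c ^ p) (sd_scale scale) (sd_bracket scale) pm (\<lambda>c. (0, c))"
  shows "pm = sd_pmap p scale"
proof
  fix x :: "'b \<times> 'a"
  obtain n where n: "p = Suc (Suc n)"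
    using prime_ge_2_nat[OF assms(2)] by (metis add_2_eq_Suc le_Suc_ex)
  have "pm (a, 0) = (0, 0)" "pm (0, c) = (0, c ^ p)" for a c
    using assms(4,5) unfolding restricted_hom_def by auto
  then have "pm (fst x, 0) = sd_pmap p scale (fst x, 0)" "pm (0, snd x) = sd_pmap p scale (0, snd x)"
    by (simp_all add: n sd_pmap_def sd_scale_def)
  then have "pm ((fst x, 0) + (0, snd x)) = sd_pmap p scale ((fst x, 0) + (0, snd x))"
    by (rule restricted_lie_algebra_pmap_add_eq[OF assms(3) sd_restricted_lie_algebra[OF assms(1,2)]])
  then show "pm x = sd_pmap p scale x"
    by simp
qed

lemma p_closed_sd_pmap: "x \<noteq> 0 \<Longrightarrow> p_closed (sd_scale scale) (sd_pmap p scale) x"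
  by (auto simp: p_closed_def sd_pmap_def)

end

theorem proposition1p1:
  fixes sc :: "'k::field \<Rightarrow> 'a::ab_group_add \<Rightarrow> 'a" and B :: "'a set" and p :: nat
  assumes char: "CHAR('k) = p" and ppos: "p > 0"
    and fd: "finite_dimensional_vector_space sc B"
  defines "ia \<equiv> (\<lambda>a::'a. (a, 0::'k))" and "ib \<equiv> (\<lambda>c::'k. (0::'a, c))"
  shows
    "restricted_lie_algebra p (sd_scale sc) (sd_bracket sc) (sd_pmap p sc)
     \<and> restricted_hom sc (\<lambda>_ _. 0) (\<lambda>_. 0) (sd_scale sc) (sd_bracket sc) (sd_pmap p sc) ia
     \<and> restricted_hom (*) (\<lambda>_ _. 0) (\<lambda>c. c ^ p) (sd_scale sc) (sd_bracket sc) (sd_pmap p sc) ib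
     \<and> (\<forall>pm. restricted_lie_algebra p (sd_scale sc) (sd_bracket sc) pm
             \<and> restricted_hom sc (\<lambda>_ _. 0) (\<lambda>_. 0) (sd_scale sc) (sd_bracket sc) pm ia
             \<and> restricted_hom (*) (\<lambda>_ _. 0) (\<lambda>c. c ^ p) (sd_scale sc) (sd_bracket sc) pm ib
             \<longrightarrow> pm = sd_pmap p sc)
     \<and> (\<forall>x. x \<noteq> 0 \<longrightarrow> p_closed (sd_scale sc) (sd_pmap p sc) x)"
proof -
  interpret vector_space sc
    using fd by (rule finite_dimensional_vector_space.axioms(1))
  have prime: "prime p"
    using char ppos prime_CHAR_semidom[where 'a='k] by simp
  have p2: "p \<ge> 2"
    using prime by (rule prime_ge_2_nat)
  show ?thesis
    unfolding ia_def ib_def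
    by (intro conjI allI impI sd_restricted_lie_algebra[OF char prime] restricted_hom_sd_inl[OF p2]
        restricted_hom_sd_inr[OF ppos] p_closed_sd_pmap sd_pmap_unique[OF char prime]) auto
qed

end
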